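(* Let $\mathbf{x}_1,\dots,\mathbf{x}_n$ be i.i.d. $N_p(\mathbf{0},\boldsymbol{\Sigma})$ with $\boldsymbol{\Sigma}=(r^{|i-j|})_{1\le i,j\le p}$, $r=r_n\in[0,1)$ arbitrary, $p=p_n\to\infty$ and $\log p=o(n)$. Then $$\max_{1\le i<j\le p}\sqrt n\,\hat\rho_{i,j}-\max_{1\le i<j\le p}\Big\{\sqrt n\,r^{|i-j|}+\frac1{\sqrt n}\sum_{k=1}^n\Big[x_{ki}x_{kj}-\frac{r^{|i-j|}}{2}(x_{ki}^2+x_{kj}^2)\Big]\Big\}=O_{\mathbb P}\Big(\frac{\log p}{\sqrt n}\Big).$$
   Context: Write $\mathbf{x}_k=(x_{k1},\dots,x_{kp})^T$ and $\hat\rho_{i,j}=\frac{\sum_{k=1}^n x_{ki}x_{kj}}{\sqrt{\sum_{k=1}^n x_{ki}^2\sum_{k=1}^n x_{kj}^2}}$. $\xi_n=O_{\mathbb P}(a_n)$ means $\lim_{C\to\infty}\limsup_{n}\mathbb P(|\xi_n/a_n|>C)=0$. *)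

theory Defs
  imports "HOL-Probability.Probability" "HOL-Library.Landau_Symbols"
begin

definition ar1_cov :: "real \<Rightarrow> nat \<Rightarrow> nat \<Rightarrow> real" where
  "ar1_cov r i j = r ^ nat \<bar>int i - int j\<bar>"

text \<open>Sample correlation (uncentred) of columns i and j of the n x p data matrix x,
  where x k i is the i-th coordinate of the k-th observation (k = 1..n).\<close>
definition rho_hat :: "nat \<Rightarrow> (nat \<Rightarrow> nat \<Rightarrow> real) \<Rightarrow> nat \<Rightarrow> nat \<Rightarrow> real" where
  "rho_hat n x i j =
     (\<Sum>k=1..n. x k i * x k j) /
     sqrt ((\<Sum>k=1..n. (x k i)\<^sup>2) * (\<Sum>k=1..n. (x k j)\<^sup>2))"

definition centered_normal :: "real \<Rightarrow> real measure" where
  "centered_normal v = (if v = 0 then return borel 0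
                        else density lborel (normal_density 0 (sqrt v)))"

definition centered_gaussian_vector ::
  "'a measure \<Rightarrow> nat \<Rightarrow> (nat \<Rightarrow> nat \<Rightarrow> real) \<Rightarrow> ('a \<Rightarrow> nat \<Rightarrow> real) \<Rightarrow> bool" where
  "centered_gaussian_vector M p S Y \<longleftrightarrow>
     (\<forall>i\<in>{1..p}. (\<lambda>\<omega>. Y \<omega> i) \<in> borel_measurable M) \<and>
     (\<forall>c :: nat \<Rightarrow> real.
        distr M borel (\<lambda>\<omega>. \<Sum>i=1..p. c i * Y \<omega> i) =
        centered_normal (\<Sum>i=1..p. \<Sum>j=1..p. c i * S i j * c j))"

definition bounded_in_prob ::
  "(nat \<Rightarrow> 'a measure) \<Rightarrow> (nat \<Rightarrow> 'a \<Rightarrow> real) \<Rightarrow> (nat \<Rightarrow> real) \<Rightarrow> bool" where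
  "bounded_in_prob M xi a \<longleftrightarrow>
     ((\<lambda>C::real. limsup (\<lambda>n. ereal (measure (M n)
          {\<omega> \<in> space (M n). \<bar>xi n \<omega> / a n\<bar> > C}))) \<longlongrightarrow> 0) at_top"

end

theory Submission
  imports Defs
begin

text \<open>Write \<open>A = \<Sum>\<^sub>k x\<^sub>k\<^sub>i\<^sup>2\<close>, \<open>B = \<Sum>\<^sub>k x\<^sub>k\<^sub>j\<^sup>2\<close>, \<open>Q = \<Sum>\<^sub>k x\<^sub>k\<^sub>i x\<^sub>k\<^sub>j\<close> and \<open>\<rho> = r\<^bsup>|i-j|\<^esup>\<close>.
  If \<open>A\<close>, \<open>B\<close> and \<open>Q\<close> are within \<open>n t\<close> of \<open>n\<close>, \<open>n\<close> and \<open>n \<rho>\<close>, a second-order expansion of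
  \<open>Q / sqrt (A B)\<close> shows that \<open>sqrt n \<rho>\<^sub>i\<^sub>j\<close> and its linearization
  \<open>sqrt n \<rho> + (Q - \<rho> (A + B) / 2) / sqrt n\<close> differ by at most \<open>21 sqrt n t\<^sup>2\<close>, hence so do
  their maxima over the pairs. Since \<open>x\<^sub>i \<plusminus> x\<^sub>j\<close> is centred normal with variance
  \<open>2 \<plusminus> 2\<rho>\<close>, the sums \<open>\<Sum>\<^sub>k (x\<^sub>k\<^sub>i \<plusminus> x\<^sub>k\<^sub>j)\<^sup>2\<close> are scaled chi-square variables, and a Chernoff
  bound makes each of them fail to concentrate with probability at most \<open>2 exp (-n t\<^sup>2 / 16)\<close>.
  With \<open>t = 8 sqrt (log p / n)\<close> a union bound over the \<open>2 p\<^sup>2\<close> sums gives, for all large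
  \<open>n\<close>, a difference of at most \<open>1344 log p / sqrt n\<close> outside an event of probability
  \<open>4 / p\<^sup>2 \<longrightarrow> 0\<close>.\<close>

lemma nn_integral_exp_square_normal:
  fixes \<sigma> s :: real
  assumes \<sigma>: "\<sigma> > 0" and s: "1 - 2 * s * \<sigma>\<^sup>2 > 0"
  shows "(\<integral>\<^sup>+y. ennreal (exp (s * y\<^sup>2)) \<partial>density lborel (normal_density 0 \<sigma>))
         = ennreal (1 / sqrt (1 - 2 * s * \<sigma>\<^sup>2))"
proof -
  define w where "w = 1 - 2 * s * \<sigma>\<^sup>2"
  have w: "w > 0" using s w_def by simp
  define \<tau> where "\<tau> = \<sigma> / sqrt w"
  have \<tau>: "\<tau> > 0" "\<tau>\<^sup>2 = \<sigma>\<^sup>2 / w" using \<sigma> w by (simp_all add: \<tau>_def power_divide)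
  have density_eq: "normal_density 0 \<sigma> y * exp (s * y\<^sup>2) = (1 / sqrt w) * normal_density 0 \<tau> y" for y
  proof -
    have sq: "sqrt (2 * pi * \<tau>\<^sup>2) = sqrt (2 * pi * \<sigma>\<^sup>2) / sqrt w"
      using w by (simp add: \<tau>(2) real_sqrt_divide)
    have ex: "-(y - 0)\<^sup>2 / (2 * \<tau>\<^sup>2) = -(y - 0)\<^sup>2 / (2 * \<sigma>\<^sup>2) + s * y\<^sup>2"
      using w \<sigma> by (simp add: \<tau>(2) w_def field_simps)
    show ?thesis
      using w unfolding normal_density_def sq ex by (simp add: exp_add exp_diff exp_minus field_simps)
  qed
  have "(\<integral>\<^sup>+y. ennreal (exp (s * y\<^sup>2)) \<partial>density lborel (normal_density 0 \<sigma>))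
      = (\<integral>\<^sup>+y. ennreal (normal_density 0 \<sigma> y * exp (s * y\<^sup>2)) \<partial>lborel)"
    by (subst nn_integral_density) (auto simp: ennreal_mult)
  also have "\<dots> = (\<integral>\<^sup>+y. ennreal (1 / sqrt w) * ennreal (normal_density 0 \<tau> y) \<partial>lborel)"
    using w by (intro nn_integral_cong) (simp add: density_eq normal_density_nonneg flip: ennreal_mult)
  also have "\<dots> = ennreal (1 / sqrt w) * (\<integral>\<^sup>+y. ennreal (normal_density 0 \<tau> y) \<partial>lborel)"
    by (subst nn_integral_cmult) auto
  also have "(\<integral>\<^sup>+y. ennreal (normal_density 0 \<tau> y) \<partial>lborel) = 1"
    using integrable_normal_density[of \<tau> 0] integral_normal_density[of \<tau> 0] \<tau>
    by (subst nn_integral_eq_integral) auto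
  finally show ?thesis by (simp add: w_def)
qed

lemma nn_integral_exp_sum_squares_indep_normal:
  assumes "prob_space M" and fin: "finite I"
    and ind: "prob_space.indep_vars M (\<lambda>_. borel) Y I"
    and dist: "\<And>k. k \<in> I \<Longrightarrow> distr M borel (Y k) = density lborel (normal_density 0 (sqrt v))"
    and v: "v > 0" and s: "1 - 2 * s * v > 0"
  shows "(\<integral>\<^sup>+\<omega>. ennreal (exp (s * (\<Sum>k\<in>I. (Y k \<omega>)\<^sup>2))) \<partial>M)
       = ennreal (exp (- (real (card I) * ln (1 - 2 * s * v) / 2)))"
proof -
  interpret prob_space M by fact
  have "(\<integral>\<^sup>+\<omega>. ennreal (exp (s * (\<Sum>k\<in>I. (Y k \<omega>)\<^sup>2))) \<partial>M)
      = (\<integral>\<^sup>+\<omega>. (\<Prod>k\<in>I. ennreal (exp (s * (Y k \<omega>)\<^sup>2))) \<partial>M)"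
    by (intro nn_integral_cong) (simp add: sum_distrib_left exp_sum[OF fin] prod_ennreal)
  also have "\<dots> = (\<Prod>k\<in>I. \<integral>\<^sup>+\<omega>. ennreal (exp (s * (Y k \<omega>)\<^sup>2)) \<partial>M)"
    by (rule indep_vars_nn_integral[OF fin indep_vars_compose2[OF ind]]) auto
  also have "\<dots> = (\<Prod>k\<in>I. ennreal (1 / sqrt (1 - 2 * s * v)))"
  proof (intro prod.cong refl)
    fix k assume k: "k \<in> I"
    then have "Y k \<in> borel_measurable M" using ind by (auto simp: indep_vars_def)
    then have "(\<integral>\<^sup>+\<omega>. ennreal (exp (s * (Y k \<omega>)\<^sup>2)) \<partial>M)
        = (\<integral>\<^sup>+y. ennreal (exp (s * y\<^sup>2)) \<partial>density lborel (normal_density 0 (sqrt v)))"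
      by (subst dist[OF k, symmetric], subst nn_integral_distr) auto
    also have "\<dots> = ennreal (1 / sqrt (1 - 2 * s * v))"
      using nn_integral_exp_square_normal[of "sqrt v" s] v s by simp
    finally show "(\<integral>\<^sup>+\<omega>. ennreal (exp (s * (Y k \<omega>)\<^sup>2)) \<partial>M) = ennreal (1 / sqrt (1 - 2 * s * v))" .
  qed
  also have "\<dots> = ennreal ((1 / sqrt (1 - 2 * s * v)) ^ card I)"
    using s by (simp add: ennreal_power)
  also have "(1 / sqrt (1 - 2 * s * v)) ^ card I = exp (- (real (card I) * ln (1 - 2 * s * v) / 2))"
  proof -
    have "1 / sqrt (1 - 2 * s * v) = exp (- (ln (1 - 2 * s * v) / 2))"
      using s by (simp add: powr_half_sqrt[symmetric] powr_def exp_minus inverse_eq_divide)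
    then show ?thesis by (simp flip: exp_of_nat_mult)
  qed
  finally show ?thesis .
qed

text \<open>The Chernoff exponents for a sum of \<open>N\<close> squares of independent \<open>N(0, v)\<close> variables,
  whose moment generating function is \<open>(1 - 2 s v)\<^bsup>-N/2\<^esup>\<close>, at \<open>s = \<plusminus>t / (8 v)\<close>.\<close>

lemma chernoff_exponent_upper_tail:
  fixes t N v :: real
  assumes t: "0 < t" "t \<le> 1" and N: "N \<ge> 0" and v: "v > 0"
  shows "exp (- (t / (8 * v)) * (N * v * (1 + t))) * exp (- (N * ln (1 - 2 * (t / (8 * v)) * v) / 2))
         \<le> exp (- (N * t\<^sup>2 / 16))"
proof -
  have "- (t/4) - 2 * (t/4)\<^sup>2 \<le> ln (1 - t/4)"
    by (rule ln_one_minus_pos_lower_bound) (use t in auto)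
  then have "(- t / 8 - t\<^sup>2/8) - ln (1 - t/4) / 2 \<le> - t\<^sup>2/16"
    by (simp add: power2_eq_square field_simps)
  then have "N * (- t / 8 - t\<^sup>2/8) + (- (N * ln (1 - t / 4) / 2)) \<le> - (N * t\<^sup>2 / 16)"
    using mult_left_mono[OF _ N] by (fastforce simp: algebra_simps)
  moreover have "2 * (t / (8 * v)) * v = t / 4"
    and "- (t / (8 * v)) * (N * v * (1 + t)) = N * (- t / 8 - t\<^sup>2/8)"
    using v by (simp_all add: power2_eq_square field_simps)
  ultimately show ?thesis by (simp only: exp_add[symmetric] exp_le_cancel_iff)
qed

lemma chernoff_exponent_lower_tail:
  fixes t N v :: real
  assumes t: "0 < t" "t \<le> 1" and N: "N \<ge> 0" and v: "v > 0"
  shows "exp ((t / (8 * v)) * (N * v * (1 - t))) * exp (- (N * ln (1 - 2 * (- (t / (8 * v))) * v) / 2))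
         \<le> exp (- (N * t\<^sup>2 / 16))"
proof -
  have "(t/4) - (t/4)\<^sup>2 \<le> ln (1 + t/4)"
    by (rule ln_one_plus_pos_lower_bound) (use t in auto)
  then have "(t / 8 - t\<^sup>2/8) - ln (1 + t/4) / 2 \<le> - t\<^sup>2/16"
    by (simp add: power2_eq_square field_simps) (use mult_nonneg_nonneg[of t t] t in linarith)
  then have "N * (t / 8 - t\<^sup>2/8) + (- (N * ln (1 + t / 4) / 2)) \<le> - (N * t\<^sup>2 / 16)"
    using mult_left_mono[OF _ N] by (fastforce simp: algebra_simps)
  moreover have "1 - 2 * (- (t / (8 * v))) * v = 1 + t / 4"
    and "(t / (8 * v)) * (N * v * (1 - t)) = N * (t / 8 - t\<^sup>2/8)"
    using v by (simp_all add: power2_eq_square field_simps)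
  ultimately show ?thesis by (simp only: exp_add[symmetric] exp_le_cancel_iff)
qed

lemma chi_square_upper_tail:
  assumes "prob_space M" and fin: "finite I"
    and ind: "prob_space.indep_vars M (\<lambda>_. borel) Y I"
    and dist: "\<And>k. k \<in> I \<Longrightarrow> distr M borel (Y k) = density lborel (normal_density 0 (sqrt v))"
    and v: "v > 0" and t: "0 < t" "t \<le> 1"
  shows "measure M {\<omega>\<in>space M. (\<Sum>k\<in>I. (Y k \<omega>)\<^sup>2) \<ge> real (card I) * v * (1 + t)}
         \<le> exp (- (real (card I) * t\<^sup>2 / 16))"
proof -
  interpret prob_space M by fact
  define s where "s = t / (8 * v)"
  have s: "s > 0" "1 - 2 * s * v > 0" using t v by (simp_all add: s_def)
  have [measurable]: "k \<in> I \<Longrightarrow> Y k \<in> borel_measurable M" for k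
    using ind by (auto simp: indep_vars_def)
  have "emeasure M {\<omega>\<in>space M. (\<Sum>k\<in>I. (Y k \<omega>)\<^sup>2) \<ge> real (card I) * v * (1 + t)}
      \<le> ennreal (exp (- s * (real (card I) * v * (1 + t))))
         * (\<integral>\<^sup>+\<omega>. ennreal (exp (s * (\<Sum>k\<in>I. (Y k \<omega>)\<^sup>2))) * indicator (space M) \<omega> \<partial>M)"
    by (rule Chernoff_ineq_nn_integral_ge[OF s(1)]) auto
  also have "(\<integral>\<^sup>+\<omega>. ennreal (exp (s * (\<Sum>k\<in>I. (Y k \<omega>)\<^sup>2))) * indicator (space M) \<omega> \<partial>M)
      = ennreal (exp (- (real (card I) * ln (1 - 2 * s * v) / 2)))"
    using nn_integral_exp_sum_squares_indep_normal[OF prob_space_axioms fin ind dist v s(2)]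
    by (simp add: nn_integral_cong[of _ "\<lambda>\<omega>. _ * indicator (space M) \<omega>"])
  also have "ennreal (exp (- s * (real (card I) * v * (1 + t))))
      * ennreal (exp (- (real (card I) * ln (1 - 2 * s * v) / 2))) \<le> ennreal (exp (- (real (card I) * t\<^sup>2 / 16)))"
    unfolding s_def ennreal_mult''[symmetric, OF exp_ge_zero]
    by (intro ennreal_leI chernoff_exponent_upper_tail) (use t v in auto)
  finally show ?thesis by (simp add: emeasure_eq_measure ennreal_le_iff)
qed

lemma chi_square_lower_tail:
  assumes "prob_space M" and fin: "finite I"
    and ind: "prob_space.indep_vars M (\<lambda>_. borel) Y I"
    and dist: "\<And>k. k \<in> I \<Longrightarrow> distr M borel (Y k) = density lborel (normal_density 0 (sqrt v))"
    and v: "v > 0" and t: "0 < t" "t \<le> 1"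
  shows "measure M {\<omega>\<in>space M. (\<Sum>k\<in>I. (Y k \<omega>)\<^sup>2) \<le> real (card I) * v * (1 - t)}
         \<le> exp (- (real (card I) * t\<^sup>2 / 16))"
proof -
  interpret prob_space M by fact
  define s where "s = t / (8 * v)"
  have s: "s > 0" "1 - 2 * (- s) * v > 0" using t v by (simp_all add: s_def)
  have [measurable]: "k \<in> I \<Longrightarrow> Y k \<in> borel_measurable M" for k
    using ind by (auto simp: indep_vars_def)
  have "emeasure M {\<omega>\<in>space M. (\<Sum>k\<in>I. (Y k \<omega>)\<^sup>2) \<le> real (card I) * v * (1 - t)}
      \<le> ennreal (exp (s * (real (card I) * v * (1 - t))))
         * (\<integral>\<^sup>+\<omega>. ennreal (exp (- s * (\<Sum>k\<in>I. (Y k \<omega>)\<^sup>2))) * indicator (space M) \<omega> \<partial>M)"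
    by (rule Chernoff_ineq_nn_integral_le[OF s(1)]) auto
  also have "(\<integral>\<^sup>+\<omega>. ennreal (exp (- s * (\<Sum>k\<in>I. (Y k \<omega>)\<^sup>2))) * indicator (space M) \<omega> \<partial>M)
      = ennreal (exp (- (real (card I) * ln (1 - 2 * (- s) * v) / 2)))"
    using nn_integral_exp_sum_squares_indep_normal[OF prob_space_axioms fin ind dist v s(2)]
    by (simp add: nn_integral_cong[of _ "\<lambda>\<omega>. _ * indicator (space M) \<omega>"])
  also have "ennreal (exp (s * (real (card I) * v * (1 - t))))
      * ennreal (exp (- (real (card I) * ln (1 - 2 * (- s) * v) / 2))) \<le> ennreal (exp (- (real (card I) * t\<^sup>2 / 16)))"
    unfolding s_def ennreal_mult''[symmetric, OF exp_ge_zero]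
    by (intro ennreal_leI chernoff_exponent_lower_tail) (use t v in auto)
  finally show ?thesis by (simp add: emeasure_eq_measure ennreal_le_iff)
qed

lemma chi_square_concentration:
  assumes "prob_space M" and "finite I"
    and "prob_space.indep_vars M (\<lambda>_. borel) Y I"
    and "\<And>k. k \<in> I \<Longrightarrow> distr M borel (Y k) = density lborel (normal_density 0 (sqrt v))"
    and "v > 0" and "0 < t" "t \<le> 1"
  shows "measure M {\<omega>\<in>space M. \<bar>(\<Sum>k\<in>I. (Y k \<omega>)\<^sup>2) - real (card I) * v\<bar> > real (card I) * t * v}
         \<le> 2 * exp (- (real (card I) * t\<^sup>2 / 16))"
proof -
  interpret prob_space M by fact
  define Z where "Z = (\<lambda>\<omega>. \<Sum>k\<in>I. (Y k \<omega>)\<^sup>2)"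
  define N where "N = real (card I)"
  have [measurable]: "k \<in> I \<Longrightarrow> Y k \<in> borel_measurable M" for k
    using assms(3) by (auto simp: indep_vars_def)
  have "{\<omega>\<in>space M. \<bar>Z \<omega> - N * v\<bar> > N * t * v}
     \<subseteq> {\<omega>\<in>space M. Z \<omega> \<ge> N * v * (1 + t)} \<union> {\<omega>\<in>space M. Z \<omega> \<le> N * v * (1 - t)}"
    by (auto simp: algebra_simps abs_if)
  then have "measure M {\<omega>\<in>space M. \<bar>Z \<omega> - N * v\<bar> > N * t * v}
     \<le> measure M ({\<omega>\<in>space M. Z \<omega> \<ge> N * v * (1 + t)} \<union> {\<omega>\<in>space M. Z \<omega> \<le> N * v * (1 - t)})"
    by (rule finite_measure_mono) (auto simp: Z_def)
  also have "\<dots> \<le> measure M {\<omega>\<in>space M. Z \<omega> \<ge> N * v * (1 + t)} + measure M {\<omega>\<in>space M. Z \<omega> \<le> N * v * (1 - t)}"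
    by (rule measure_subadditive) (auto simp: Z_def)
  also have "\<dots> \<le> 2 * exp (- (N * t\<^sup>2 / 16))"
    using chi_square_upper_tail[OF assms] chi_square_lower_tail[OF assms] by (simp add: Z_def N_def)
  finally show ?thesis unfolding Z_def N_def .
qed

lemma inverse_sqrt_one_plus_approx:
  fixes s :: real
  assumes s: "\<bar>s\<bar> \<le> 1/2"
  shows "\<bar>1 / sqrt (1 + s) - 1 + s / 2\<bar> \<le> s\<^sup>2"
proof -
  define y where "y = sqrt (1 + s)"
  have y0: "y > 0" and ys: "y\<^sup>2 = 1 + s" using s by (auto simp: y_def)
  have "(7/10)\<^sup>2 \<le> y\<^sup>2" using ys s by (simp add: power2_eq_square abs_le_iff)
  then have y7: "7/10 \<le> y" using y0 by (simp add: power2_le_iff_abs_le)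
  have sy: "s = y\<^sup>2 - 1" using ys by simp
  have eq: "1 / y - 1 + s / 2 = (y - 1)\<^sup>2 * ((y + 2) / (2 * y))"
    using y0 unfolding sy by (simp add: field_simps power2_eq_square)
  have "2 * y * (17/10)\<^sup>2 \<le> 2 * y * (y + 1)\<^sup>2"
    using y0 y7 by (intro mult_left_mono power_mono) auto
  moreover have "2 * y * (17/10)\<^sup>2 = 289/50 * y" by (simp add: power2_eq_square)
  ultimately have "y + 2 \<le> 2 * y * (y + 1)\<^sup>2" using y7 by linarith
  then have "(y + 2) / (2 * y) \<le> (y + 1)\<^sup>2"
    using y0 by (simp add: divide_le_eq mult.commute)
  then have "(y - 1)\<^sup>2 * ((y + 2) / (2 * y)) \<le> (y - 1)\<^sup>2 * (y + 1)\<^sup>2"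
    by (intro mult_left_mono) auto
  moreover have "(y - 1)\<^sup>2 * (y + 1)\<^sup>2 = s\<^sup>2"
    unfolding sy by (simp add: power2_eq_square algebra_simps)
  moreover have "0 \<le> (y - 1)\<^sup>2 * ((y + 2) / (2 * y))" using y0 by simp
  ultimately show ?thesis unfolding y_def[symmetric] eq by simp
qed

lemma correlation_expansion_unit_scale:
  fixes a b c r t :: real
  assumes a: "\<bar>a\<bar> \<le> t" and b: "\<bar>b\<bar> \<le> t" and c: "\<bar>c\<bar> \<le> t"
    and t: "0 \<le> t" "t \<le> 1/6" and r: "0 \<le> r" "r \<le> 1"
  shows "\<bar>(r + c) / sqrt ((1 + a) * (1 + b)) - (r + c - r * (a + b) / 2)\<bar> \<le> 21 * t\<^sup>2"
proof -
  define s where "s = a + b + a * b"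
  define E where "E = 1 / sqrt (1 + s) - 1 + s / 2"
  have ab: "\<bar>a * b\<bar> \<le> t * t" unfolding abs_mult using a b t by (intro mult_mono) auto
  have "t * t \<le> t / 6" using mult_left_mono[of t "1/6" t] t by simp
  then have s_bound: "\<bar>s\<bar> \<le> 13/6 * t" using a b ab unfolding s_def abs_le_iff by linarith
  have E: "\<bar>E\<bar> \<le> (13/6 * t)\<^sup>2"
  proof -
    have "\<bar>E\<bar> \<le> s\<^sup>2" unfolding E_def by (rule inverse_sqrt_one_plus_approx) (use s_bound t in linarith)
    also have "\<dots> \<le> (13/6 * t)\<^sup>2" using s_bound by (metis abs_ge_zero power2_abs power_mono)
    finally show ?thesis .
  qed
  have rc: "\<bar>r + c\<bar> \<le> 7/6" using r c t unfolding abs_le_iff by linarith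
  have "(r + c) / sqrt ((1 + a) * (1 + b)) - (r + c - r * (a + b) / 2)
       = (r + c) * E - c * (a + b) / 2 - (r + c) * (a * b) / 2"
    unfolding E_def s_def by (simp add: field_simps)
  moreover have "\<bar>(r + c) * E\<bar> \<le> 7/6 * (13/6 * t)\<^sup>2"
    unfolding abs_mult using rc E by (intro mult_mono) auto
  moreover have "\<bar>c * (a + b)\<bar> \<le> t * (2 * t)"
    unfolding abs_mult using a b c t by (intro mult_mono) (auto simp: abs_le_iff)
  moreover have "\<bar>(r + c) * (a * b)\<bar> \<le> 7/6 * (t * t)"
    unfolding abs_mult[of "r + c"] using rc ab by (intro mult_mono) auto
  moreover have "7/6 * (13/6 * t)\<^sup>2 + t * (2 * t) / 2 + 7/6 * (t * t) / 2 \<le> 21 * t\<^sup>2"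
    by (simp add: power2_eq_square)
  ultimately show ?thesis by (simp only: abs_le_iff) linarith
qed

lemma correlation_expansion:
  fixes A B Q n r t :: real
  assumes n: "n > 0" and r: "0 \<le> r" "r \<le> 1" and t: "0 \<le> t" "t \<le> 1/6"
    and A: "\<bar>A - n\<bar> \<le> n * t" and B: "\<bar>B - n\<bar> \<le> n * t" and Q: "\<bar>Q - n * r\<bar> \<le> n * t"
  shows "\<bar>sqrt n * (Q / sqrt (A * B)) - (sqrt n * r + (1 / sqrt n) * (Q - r / 2 * (A + B)))\<bar>
         \<le> 21 * sqrt n * t\<^sup>2"
proof -
  define a b c where "a = A / n - 1" and "b = B / n - 1" and "c = Q / n - r"
  have A_eq: "A = n * (1 + a)" and B_eq: "B = n * (1 + b)" and Q_eq: "Q = n * (r + c)"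
    using n by (auto simp: a_def b_def c_def field_simps)
  have scaled: "\<bar>n * z\<bar> \<le> n * t \<Longrightarrow> \<bar>z\<bar> \<le> t" for z
    using n by (simp add: abs_mult)
  have "\<bar>a\<bar> \<le> t" "\<bar>b\<bar> \<le> t" "\<bar>c\<bar> \<le> t"
    using A B Q unfolding A_eq B_eq Q_eq by (auto intro!: scaled simp: algebra_simps)
  note expansion = correlation_expansion_unit_scale[OF this t r]
  have sn: "sqrt n > 0" using n by simp
  have "sqrt (A * B) = n * sqrt ((1 + a) * (1 + b))"
  proof -
    have "A * B = n\<^sup>2 * ((1 + a) * (1 + b))"
      unfolding A_eq B_eq by (simp add: power2_eq_square algebra_simps)
    then show ?thesis using n by (simp add: real_sqrt_mult)
  qed
  then have "Q / sqrt (A * B) = (r + c) / sqrt ((1 + a) * (1 + b))"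
    unfolding Q_eq using n by simp
  moreover have "1 / sqrt n * (Q - r / 2 * (A + B)) = sqrt n * (c - r * (a + b) / 2)"
  proof -
    have "1 / sqrt n * (n * z) = (n / sqrt n) * z" for z by simp
    also have "n / sqrt n = sqrt n" using n by (simp add: real_div_sqrt)
    moreover have "Q - r / 2 * (A + B) = n * (c - r * (a + b) / 2)"
      unfolding A_eq B_eq Q_eq by (simp add: algebra_simps)
    ultimately show ?thesis by simp
  qed
  ultimately have "sqrt n * (Q / sqrt (A * B)) - (sqrt n * r + (1 / sqrt n) * (Q - r / 2 * (A + B)))
      = sqrt n * ((r + c) / sqrt ((1 + a) * (1 + b)) - (r + c - r * (a + b) / 2))"
    by (simp add: algebra_simps)
  also have "\<bar>\<dots>\<bar> \<le> sqrt n * (21 * t\<^sup>2)"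
    unfolding abs_mult using sn expansion by (simp add: mult_left_mono)
  finally show ?thesis by simp
qed

lemma Max_image_diff_le:
  fixes f g :: "'b \<Rightarrow> real"
  assumes "finite S" "S \<noteq> {}" "\<And>x. x \<in> S \<Longrightarrow> \<bar>f x - g x\<bar> \<le> D"
  shows "\<bar>Max (f ` S) - Max (g ` S)\<bar> \<le> D"
proof -
  have "Max (f ` S) \<in> f ` S" "Max (g ` S) \<in> g ` S" using assms by (intro Max_in; simp)+
  then obtain x y where x: "x \<in> S" "Max (f ` S) = f x" and y: "y \<in> S" "Max (g ` S) = g y"
    by auto
  have "g x \<le> Max (g ` S)" "f y \<le> Max (f ` S)" using x y assms by (intro Max_ge; simp)+
  moreover have "\<bar>f x - g x\<bar> \<le> D" "\<bar>f y - g y\<bar> \<le> D" using x y assms by auto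
  ultimately show ?thesis using x y by (simp add: abs_le_iff)
qed

lemma sum_square_add_scaled:
  fixes f g :: "'b \<Rightarrow> real"
  shows "(\<Sum>k\<in>K. (f k + s * g k)\<^sup>2)
       = (\<Sum>k\<in>K. (f k)\<^sup>2) + 2 * s * (\<Sum>k\<in>K. f k * g k) + s * s * (\<Sum>k\<in>K. (g k)\<^sup>2)"
proof -
  have "(\<Sum>k\<in>K. (f k + s * g k)\<^sup>2) = (\<Sum>k\<in>K. (f k)\<^sup>2 + (2 * s) * (f k * g k) + (s * s) * (g k)\<^sup>2)"
    by (intro sum.cong) (auto simp: power2_eq_square algebra_simps)
  then show ?thesis by (simp add: sum.distrib sum_distrib_left)
qed

lemma ar1_cov_sym: "ar1_cov r i j = ar1_cov r j i"
  unfolding ar1_cov_def by (simp add: abs_minus_commute)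

lemma ar1_cov_diag [simp]: "ar1_cov r i i = 1"
  unfolding ar1_cov_def by simp

lemma ar1_cov_nonneg: "0 \<le> r \<Longrightarrow> 0 \<le> ar1_cov r i j"
  unfolding ar1_cov_def by simp

lemma ar1_cov_le_one: "0 \<le> r \<Longrightarrow> r \<le> 1 \<Longrightarrow> ar1_cov r i j \<le> 1"
  unfolding ar1_cov_def by (simp add: power_le_one)

lemma ar1_cov_less_one: "0 \<le> r \<Longrightarrow> r < 1 \<Longrightarrow> i \<noteq> j \<Longrightarrow> ar1_cov r i j < 1"
  unfolding ar1_cov_def by (simp add: power_less_one_iff)

definition bool_sign :: "bool \<Rightarrow> real" where
  "bool_sign b = (if b then 1 else -1)"

definition pair_coeff :: "nat \<Rightarrow> nat \<Rightarrow> bool \<Rightarrow> nat \<Rightarrow> real" where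
  "pair_coeff i j b l = (if l = i then 1 else 0) + bool_sign b * (if l = j then 1 else 0)"

lemma sum_pair_coeff_mult:
  assumes "finite L" "i \<in> L" "j \<in> L"
  shows "(\<Sum>l\<in>L. pair_coeff i j b l * f l) = f i + bool_sign b * f j"
proof -
  have "(\<Sum>l\<in>L. pair_coeff i j b l * f l)
      = (\<Sum>l\<in>L. (if l = i then f l else 0)) + (\<Sum>l\<in>L. (if l = j then bool_sign b * f l else 0))"
    unfolding pair_coeff_def by (subst sum.distrib[symmetric]) (intro sum.cong, auto simp: algebra_simps)
  then show ?thesis using assms by (simp add: sum.delta)
qed

lemma quadratic_form_pair_coeff:
  assumes "finite L" "i \<in> L" "j \<in> L"
  shows "(\<Sum>l\<in>L. \<Sum>m\<in>L. pair_coeff i j b l * S l m * pair_coeff i j b m)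
       = S i i + bool_sign b * (S i j + S j i) + S j j"
proof -
  have inner: "(\<Sum>m\<in>L. pair_coeff i j b l * S l m * pair_coeff i j b m)
      = pair_coeff i j b l * (S l i + bool_sign b * S l j)" for l
  proof -
    have "(\<Sum>m\<in>L. pair_coeff i j b l * S l m * pair_coeff i j b m)
        = pair_coeff i j b l * (\<Sum>m\<in>L. pair_coeff i j b m * S l m)"
      by (simp add: sum_distrib_left mult_ac)
    then show ?thesis using sum_pair_coeff_mult[OF assms] by simp
  qed
  have "(\<Sum>l\<in>L. \<Sum>m\<in>L. pair_coeff i j b l * S l m * pair_coeff i j b m)
      = S i i + bool_sign b * S i j + bool_sign b * (S j i + bool_sign b * S j j)"
    unfolding inner by (rule sum_pair_coeff_mult[OF assms])
  then show ?thesis by (cases b) (simp_all add: bool_sign_def algebra_simps)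
qed

lemma centered_gaussian_vector_pair_distr:
  assumes gauss: "centered_gaussian_vector M P S Y" and ij: "i \<in> {1..P}" "j \<in> {1..P}"
    and v: "v = S i i + bool_sign b * (S i j + S j i) + S j j" "v > 0"
  shows "distr M borel (\<lambda>\<omega>. Y \<omega> i + bool_sign b * Y \<omega> j)
       = density lborel (normal_density 0 (sqrt v))"
proof -
  have "distr M borel (\<lambda>\<omega>. \<Sum>l=1..P. pair_coeff i j b l * Y \<omega> l)
      = centered_normal (\<Sum>l=1..P. \<Sum>m=1..P. pair_coeff i j b l * S l m * pair_coeff i j b m)"
    using gauss unfolding centered_gaussian_vector_def by blast
  moreover have "(\<lambda>\<omega>. \<Sum>l=1..P. pair_coeff i j b l * Y \<omega> l) = (\<lambda>\<omega>. Y \<omega> i + bool_sign b * Y \<omega> j)"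
    using sum_pair_coeff_mult[OF _ ij] by simp
  moreover have "(\<Sum>l=1..P. \<Sum>m=1..P. pair_coeff i j b l * S l m * pair_coeff i j b m) = v"
    using quadratic_form_pair_coeff[OF _ ij] v by simp
  ultimately show ?thesis using v by (simp add: centered_normal_def)
qed

lemma pair_sum_square_concentration:
  fixes X :: "nat \<Rightarrow> nat \<Rightarrow> 'a \<Rightarrow> real"
  assumes "prob_space M"
    and gauss: "\<And>k. k \<in> {1..n} \<Longrightarrow> centered_gaussian_vector M P (ar1_cov r) (\<lambda>\<omega> i. X k i \<omega>)"
    and indep: "prob_space.indep_vars M (\<lambda>_. PiM {1..P} (\<lambda>_. borel))
        (\<lambda>k \<omega>. restrict (\<lambda>i. X k i \<omega>) {1..P}) {1..n}"
    and r: "0 \<le> r" "r < 1" and t: "0 < t" "t \<le> 1"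
    and ij: "i \<in> {1..P}" "j \<in> {1..P}" "b \<or> i \<noteq> j"
  defines "v \<equiv> 2 + 2 * bool_sign b * ar1_cov r i j"
  shows "{\<omega>\<in>space M. \<bar>(\<Sum>k\<in>{1..n}. (X k i \<omega> + bool_sign b * X k j \<omega>)\<^sup>2) - real n * v\<bar>
            > real n * t * v} \<in> sets M"
    and "measure M {\<omega>\<in>space M. \<bar>(\<Sum>k\<in>{1..n}. (X k i \<omega> + bool_sign b * X k j \<omega>)\<^sup>2) - real n * v\<bar>
            > real n * t * v} \<le> 2 * exp (- (real n * t\<^sup>2 / 16))"
proof -
  interpret prob_space M by fact
  define Y where "Y = (\<lambda>k \<omega>. X k i \<omega> + bool_sign b * X k j \<omega>)"
  have v: "v > 0"
    using ij ar1_cov_nonneg[OF r(1), of i j] ar1_cov_less_one[OF r, of i j]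
    by (cases b) (auto simp: v_def bool_sign_def)
  have [measurable]: "k \<in> {1..n} \<Longrightarrow> l \<in> {1..P} \<Longrightarrow> (\<lambda>\<omega>. X k l \<omega>) \<in> borel_measurable M" for k l
    using gauss unfolding centered_gaussian_vector_def by blast
  have dist: "distr M borel (Y k) = density lborel (normal_density 0 (sqrt v))" if "k \<in> {1..n}" for k
    unfolding Y_def
    by (rule centered_gaussian_vector_pair_distr[OF gauss[OF that] ij(1,2)])
       (use v in \<open>simp_all add: v_def ar1_cov_sym[of r j i]\<close>)
  have "indep_vars (\<lambda>_. borel) (\<lambda>k \<omega>. (\<lambda>x. x i + bool_sign b * x j) (restrict (\<lambda>l. X k l \<omega>) {1..P})) {1..n}"
    using ij by (intro indep_vars_compose2[OF indep]) measurable
  then have ind: "indep_vars (\<lambda>_. borel) Y {1..n}"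
    using ij by (simp add: Y_def)
  have "{\<omega>\<in>space M. \<bar>(\<Sum>k\<in>{1..n}. (Y k \<omega>)\<^sup>2) - real n * v\<bar> > real n * t * v} \<in> sets M"
    using ij unfolding Y_def by measurable
  moreover have "measure M {\<omega>\<in>space M. \<bar>(\<Sum>k\<in>{1..n}. (Y k \<omega>)\<^sup>2) - real n * v\<bar> > real n * t * v}
      \<le> 2 * exp (- (real n * t\<^sup>2 / 16))"
    using chi_square_concentration[OF prob_space_axioms _ ind dist v t] by simp
  ultimately show "{\<omega>\<in>space M. \<bar>(\<Sum>k\<in>{1..n}. (X k i \<omega> + bool_sign b * X k j \<omega>)\<^sup>2) - real n * v\<bar>
            > real n * t * v} \<in> sets M"
    and "measure M {\<omega>\<in>space M. \<bar>(\<Sum>k\<in>{1..n}. (X k i \<omega> + bool_sign b * X k j \<omega>)\<^sup>2) - real n * v\<bar>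
            > real n * t * v} \<le> 2 * exp (- (real n * t\<^sup>2 / 16))"
    unfolding Y_def by simp_all
qed

text \<open>The case \<open>i = j\<close> with sign \<open>+\<close> controls \<open>\<Sum>\<^sub>k x\<^sub>k\<^sub>i\<^sup>2\<close>; by polarization the two signs
  together control \<open>\<Sum>\<^sub>k x\<^sub>k\<^sub>i x\<^sub>k\<^sub>j\<close>.\<close>

definition pair_sums_concentrated :: "nat \<Rightarrow> nat \<Rightarrow> real \<Rightarrow> real \<Rightarrow> (nat \<Rightarrow> nat \<Rightarrow> real) \<Rightarrow> bool" where
  "pair_sums_concentrated n P r t x \<longleftrightarrow>
     (\<forall>i\<in>{1..P}. \<forall>j\<in>{1..P}. \<forall>b. b \<or> i \<noteq> j \<longrightarrow>
        \<bar>(\<Sum>k\<in>{1..n}. (x k i + bool_sign b * x k j)\<^sup>2) - real n * (2 + 2 * bool_sign b * ar1_cov r i j)\<bar>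
          \<le> real n * t * (2 + 2 * bool_sign b * ar1_cov r i j))"

lemma measure_not_pair_sums_concentrated:
  fixes X :: "nat \<Rightarrow> nat \<Rightarrow> 'a \<Rightarrow> real"
  assumes "prob_space M"
    and gauss: "\<And>k. k \<in> {1..n} \<Longrightarrow> centered_gaussian_vector M P (ar1_cov r) (\<lambda>\<omega> i. X k i \<omega>)"
    and indep: "prob_space.indep_vars M (\<lambda>_. PiM {1..P} (\<lambda>_. borel))
        (\<lambda>k \<omega>. restrict (\<lambda>i. X k i \<omega>) {1..P}) {1..n}"
    and r: "0 \<le> r" "r < 1" and t: "0 < t" "t \<le> 1"
  shows "{\<omega>\<in>space M. \<not> pair_sums_concentrated n P r t (\<lambda>k l. X k l \<omega>)} \<in> sets M"
    and "measure M {\<omega>\<in>space M. \<not> pair_sums_concentrated n P r t (\<lambda>k l. X k l \<omega>)}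
           \<le> 4 * (real P)\<^sup>2 * exp (- (real n * t\<^sup>2 / 16))"
proof -
  interpret prob_space M by fact
  have [measurable]: "k \<in> {1..n} \<Longrightarrow> l \<in> {1..P} \<Longrightarrow> (\<lambda>\<omega>. X k l \<omega>) \<in> borel_measurable M" for k l
    using gauss unfolding centered_gaussian_vector_def by blast
  show "{\<omega>\<in>space M. \<not> pair_sums_concentrated n P r t (\<lambda>k l. X k l \<omega>)} \<in> sets M"
    unfolding pair_sums_concentrated_def by measurable
  define J where "J = {(i, j, b). i \<in> {1..P} \<and> j \<in> {1..P} \<and> (b \<or> i \<noteq> j)}"
  define E where "E = (\<lambda>(i, j, b). {\<omega>\<in>space M.
      \<bar>(\<Sum>k\<in>{1..n}. (X k i \<omega> + bool_sign b * X k j \<omega>)\<^sup>2) - real n * (2 + 2 * bool_sign b * ar1_cov r i j)\<bar>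
        > real n * t * (2 + 2 * bool_sign b * ar1_cov r i j)})"
  have E: "E q \<in> sets M" "measure M (E q) \<le> 2 * exp (- (real n * t\<^sup>2 / 16))" if q: "q \<in> J" for q
  proof -
    obtain i j b where q_eq: "q = (i, j, b)" and ij: "i \<in> {1..P}" "j \<in> {1..P}" "b \<or> i \<noteq> j"
      using q by (auto simp: J_def)
    show "E q \<in> sets M" "measure M (E q) \<le> 2 * exp (- (real n * t\<^sup>2 / 16))"
      using pair_sum_square_concentration[OF prob_space_axioms gauss indep r t, OF _ ij]
      unfolding q_eq E_def prod.case by blast+
  qed
  have J_sub: "J \<subseteq> {1..P} \<times> {1..P} \<times> UNIV" by (auto simp: J_def)
  then have "finite J" by (rule finite_subset) auto
  have "card J \<le> card ({1..P} \<times> {1..P} \<times> (UNIV :: bool set))"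
    using J_sub by (intro card_mono) auto
  also have "\<dots> = 2 * P * P" by (simp add: card_cartesian_product)
  finally have card_J: "real (card J) \<le> 2 * (real P)\<^sup>2"
    unfolding power2_eq_square by (metis mult.assoc of_nat_le_iff of_nat_mult of_nat_numeral)
  have "{\<omega>\<in>space M. \<not> pair_sums_concentrated n P r t (\<lambda>k l. X k l \<omega>)} \<subseteq> (\<Union>q\<in>J. E q)"
  proof
    fix \<omega> assume "\<omega> \<in> {\<omega>\<in>space M. \<not> pair_sums_concentrated n P r t (\<lambda>k l. X k l \<omega>)}"
    then obtain i j b where "i \<in> {1..P}" "j \<in> {1..P}" "b \<or> i \<noteq> j" "\<omega> \<in> space M"
      and "\<not> \<bar>(\<Sum>k\<in>{1..n}. (X k i \<omega> + bool_sign b * X k j \<omega>)\<^sup>2)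
                - real n * (2 + 2 * bool_sign b * ar1_cov r i j)\<bar>
            \<le> real n * t * (2 + 2 * bool_sign b * ar1_cov r i j)"
      unfolding pair_sums_concentrated_def by blast
    then show "\<omega> \<in> (\<Union>q\<in>J. E q)"
      unfolding J_def E_def by (intro UN_I[of "(i, j, b)"]) (simp_all add: not_le)
  qed
  then have "measure M {\<omega>\<in>space M. \<not> pair_sums_concentrated n P r t (\<lambda>k l. X k l \<omega>)}
      \<le> measure M (\<Union>q\<in>J. E q)"
    using E \<open>finite J\<close> by (intro finite_measure_mono sets.finite_UN) auto
  also have "\<dots> \<le> (\<Sum>q\<in>J. measure M (E q))"
    using \<open>finite J\<close> E by (intro measure_UNION_le) auto
  also have "\<dots> \<le> real (card J) * (2 * exp (- (real n * t\<^sup>2 / 16)))"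
    using E by (intro sum_bounded_above) auto
  also have "\<dots> \<le> 4 * (real P)\<^sup>2 * exp (- (real n * t\<^sup>2 / 16))"
    using mult_right_mono[OF card_J, of "2 * exp (- (real n * t\<^sup>2 / 16))"] by simp
  finally show "measure M {\<omega>\<in>space M. \<not> pair_sums_concentrated n P r t (\<lambda>k l. X k l \<omega>)}
      \<le> 4 * (real P)\<^sup>2 * exp (- (real n * t\<^sup>2 / 16))" .
qed

definition max_corr_diff :: "nat \<Rightarrow> real \<Rightarrow> nat \<Rightarrow> (nat \<Rightarrow> nat \<Rightarrow> real) \<Rightarrow> real" where
  "max_corr_diff n r P x =
     Max ((\<lambda>(i, j). sqrt (real n) * rho_hat n x i j) ` {(i, j). 1 \<le> i \<and> i < j \<and> j \<le> P})
   - Max ((\<lambda>(i, j). sqrt (real n) * ar1_cov r i j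
           + (1 / sqrt (real n)) * (\<Sum>k=1..n. x k i * x k j - ar1_cov r i j / 2 * ((x k i)\<^sup>2 + (x k j)\<^sup>2)))
          ` {(i, j). 1 \<le> i \<and> i < j \<and> j \<le> P})"

lemma pair_sums_concentrated_diag_bound:
  assumes "pair_sums_concentrated n P r t x" "i \<in> {1..P}"
  shows "\<bar>(\<Sum>k\<in>{1..n}. (x k i)\<^sup>2) - real n\<bar> \<le> real n * t"
proof -
  have "\<bar>(\<Sum>k\<in>{1..n}. (x k i + bool_sign True * x k i)\<^sup>2) - real n * (2 + 2 * bool_sign True * ar1_cov r i i)\<bar>
      \<le> real n * t * (2 + 2 * bool_sign True * ar1_cov r i i)"
    using assms unfolding pair_sums_concentrated_def by blast
  then show ?thesis
    by (simp add: sum_square_add_scaled bool_sign_def power2_eq_square flip: sum_distrib_left)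
qed

lemma pair_sums_concentrated_cross_bound:
  assumes "pair_sums_concentrated n P r t x" "i \<in> {1..P}" "j \<in> {1..P}" "i \<noteq> j"
  shows "\<bar>(\<Sum>k\<in>{1..n}. x k i * x k j) - real n * ar1_cov r i j\<bar> \<le> real n * t"
proof -
  define A B Q where "A = (\<Sum>k\<in>{1..n}. (x k i)\<^sup>2)" and "B = (\<Sum>k\<in>{1..n}. (x k j)\<^sup>2)"
    and "Q = (\<Sum>k\<in>{1..n}. x k i * x k j)"
  define \<rho> where "\<rho> = ar1_cov r i j"
  have sums: "(\<Sum>k\<in>{1..n}. (x k i + bool_sign True * x k j)\<^sup>2) = A + 2 * Q + B"
    "(\<Sum>k\<in>{1..n}. (x k i + bool_sign False * x k j)\<^sup>2) = A - 2 * Q + B"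
    unfolding sum_square_add_scaled A_def B_def Q_def by (simp_all add: bool_sign_def)
  have good: "\<bar>(\<Sum>k\<in>{1..n}. (x k i + bool_sign b * x k j)\<^sup>2) - real n * (2 + 2 * bool_sign b * \<rho>)\<bar>
      \<le> real n * t * (2 + 2 * bool_sign b * \<rho>)" for b
    using assms unfolding pair_sums_concentrated_def \<rho>_def by blast
  have "\<bar>(A + 2 * Q + B) - real n * (2 + 2 * \<rho>)\<bar> \<le> real n * t * (2 + 2 * \<rho>)"
    and "\<bar>(A - 2 * Q + B) - real n * (2 - 2 * \<rho>)\<bar> \<le> real n * t * (2 - 2 * \<rho>)"
    using good[of True, unfolded sums(1)] good[of False, unfolded sums(2)]
    by (simp_all add: bool_sign_def)
  then show ?thesis
    unfolding Q_def[symmetric] \<rho>_def[symmetric] abs_le_iff by (simp add: algebra_simps)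
qed

lemma abs_max_corr_diff_le:
  fixes x :: "nat \<Rightarrow> nat \<Rightarrow> real"
  assumes n: "n \<ge> 1" and P: "P \<ge> 2" and r: "0 \<le> r" "r < 1" and t: "0 \<le> t" "t \<le> 1/6"
    and conc: "pair_sums_concentrated n P r t x"
  shows "\<bar>max_corr_diff n r P x\<bar> \<le> 21 * sqrt (real n) * t\<^sup>2"
  unfolding max_corr_diff_def
proof (rule Max_image_diff_le)
  show "finite {(i, j). 1 \<le> i \<and> i < j \<and> j \<le> P}"
    by (rule finite_subset[of _ "{1..P} \<times> {1..P}"]) auto
  show "{(i, j). 1 \<le> i \<and> i < j \<and> j \<le> P} \<noteq> {}"
    using P by (intro ex_in_conv[THEN iffD1] exI[of _ "(1, 2)"]) auto
  fix ij assume "ij \<in> {(i, j). 1 \<le> i \<and> i < j \<and> j \<le> P}"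
  then obtain i j where ij: "ij = (i, j)" "i \<in> {1..P}" "j \<in> {1..P}" "i \<noteq> j" by auto
  define A B Q where "A = (\<Sum>k\<in>{1..n}. (x k i)\<^sup>2)" and "B = (\<Sum>k\<in>{1..n}. (x k j)\<^sup>2)"
    and "Q = (\<Sum>k\<in>{1..n}. x k i * x k j)"
  define \<rho> where "\<rho> = ar1_cov r i j"
  have \<rho>: "0 \<le> \<rho>" "\<rho> \<le> 1" using ar1_cov_nonneg ar1_cov_le_one r by (auto simp: \<rho>_def)
  have n_pos: "real n > 0" using n by simp
  have bounds: "\<bar>A - real n\<bar> \<le> real n * t" "\<bar>B - real n\<bar> \<le> real n * t" "\<bar>Q - real n * \<rho>\<bar> \<le> real n * t"
    unfolding A_def B_def Q_def \<rho>_def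
    using pair_sums_concentrated_diag_bound[OF conc ij(2)] pair_sums_concentrated_diag_bound[OF conc ij(3)]
      pair_sums_concentrated_cross_bound[OF conc ij(2-4)] by simp_all
  note expansion = correlation_expansion[OF n_pos \<rho> t bounds]
  have "rho_hat n x i j = Q / sqrt (A * B)"
    unfolding rho_hat_def A_def B_def Q_def by simp
  moreover have "(\<Sum>k=1..n. x k i * x k j - \<rho> / 2 * ((x k i)\<^sup>2 + (x k j)\<^sup>2)) = Q - \<rho> / 2 * (A + B)"
    unfolding A_def B_def Q_def by (simp add: sum_subtractf sum.distrib sum_distrib_left algebra_simps)
  ultimately show "\<bar>(case ij of (i, j) \<Rightarrow> sqrt (real n) * rho_hat n x i j) -
          (case ij of (i, j) \<Rightarrow> sqrt (real n) * ar1_cov r i j + 1 / sqrt (real n) *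
              (\<Sum>k = 1..n. x k i * x k j - ar1_cov r i j / 2 * ((x k i)\<^sup>2 + (x k j)\<^sup>2)))\<bar>
        \<le> 21 * sqrt (real n) * t\<^sup>2"
    unfolding ij(1) prod.case \<rho>_def[symmetric] by (simp only: expansion)
qed

lemma abs_max_corr_diff_div_le:
  fixes x :: "nat \<Rightarrow> nat \<Rightarrow> real"
  assumes n: "n \<ge> 1" and P: "P \<ge> 2" and r: "0 \<le> r" "r < 1"
    and log_P: "ln (real P) \<le> real n / 2304"
    and conc: "pair_sums_concentrated n P r (8 * sqrt (ln (real P) / real n)) x"
  shows "\<bar>max_corr_diff n r P x / (ln (real P) / sqrt (real n))\<bar> \<le> 1344"
proof -
  define L where "L = ln (real P)"
  define t where "t = 8 * sqrt (L / real n)"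
  have L: "L > 0" using P by (simp add: L_def)
  have n_pos: "real n > 0" using n by simp
  have t: "t \<ge> 0" "t\<^sup>2 = 64 * L / real n" using L n_pos by (simp_all add: t_def power_mult_distrib)
  have scale: "L / sqrt (real n) > 0" using L n_pos by simp
  have "t\<^sup>2 \<le> (1/6)\<^sup>2" unfolding t(2) using log_P n_pos by (simp add: L_def field_simps)
  then have "t \<le> 1/6" using t(1) by (simp add: power2_le_iff_abs_le)
  then have "\<bar>max_corr_diff n r P x\<bar> \<le> 21 * sqrt (real n) * t\<^sup>2"
    using abs_max_corr_diff_le[OF n P r t(1)] conc by (simp add: t_def L_def)
  also have "21 * sqrt (real n) * t\<^sup>2 = 1344 * (L / sqrt (real n))"
    unfolding t(2) using n_pos by (simp add: field_simps real_sqrt_mult_self flip: real_sqrt_mult)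
  finally have "\<bar>max_corr_diff n r P x\<bar> / (L / sqrt (real n)) \<le> 1344"
    using scale by (simp only: pos_divide_le_eq)
  then show ?thesis
    unfolding L_def[symmetric] by (simp only: abs_divide[of "max_corr_diff n r P x"] abs_of_pos[OF scale])
qed

lemma max_corr_diff_tail_bound:
  fixes X :: "nat \<Rightarrow> nat \<Rightarrow> 'a \<Rightarrow> real"
  assumes "prob_space M"
    and gauss: "\<And>k. k \<in> {1..n} \<Longrightarrow> centered_gaussian_vector M P (ar1_cov r) (\<lambda>\<omega> i. X k i \<omega>)"
    and indep: "prob_space.indep_vars M (\<lambda>_. PiM {1..P} (\<lambda>_. borel))
        (\<lambda>k \<omega>. restrict (\<lambda>i. X k i \<omega>) {1..P}) {1..n}"
    and r: "0 \<le> r" "r < 1" and n: "n \<ge> 1" and P: "P \<ge> 2"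
    and log_P: "ln (real P) \<le> real n / 2304" and C: "C \<ge> 1344"
  shows "measure M {\<omega> \<in> space M.
           \<bar>max_corr_diff n r P (\<lambda>k l. X k l \<omega>) / (ln (real P) / sqrt (real n))\<bar> > C}
         \<le> 4 / (real P)\<^sup>2"
proof -
  interpret prob_space M by fact
  define t where "t = 8 * sqrt (ln (real P) / real n)"
  have n_pos: "real n > 0" using n by simp
  have t: "t > 0" "t\<^sup>2 = 64 * ln (real P) / real n"
    using P n_pos by (simp_all add: t_def power_mult_distrib)
  have "t\<^sup>2 \<le> (1/6)\<^sup>2" unfolding t(2) using log_P n_pos by (simp add: field_simps)
  then have "t \<le> 1" using t(1) by (simp add: power2_le_iff_abs_le)
  note bad = measure_not_pair_sums_concentrated[OF prob_space_axioms gauss indep r t(1) this]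
  have "\<not> pair_sums_concentrated n P r t x"
    if "\<bar>max_corr_diff n r P x / (ln (real P) / sqrt (real n))\<bar> > C" for x
    using abs_max_corr_diff_div_le[OF n P r log_P, of x] that C unfolding t_def by linarith
  then have "measure M {\<omega> \<in> space M.
        \<bar>max_corr_diff n r P (\<lambda>k l. X k l \<omega>) / (ln (real P) / sqrt (real n))\<bar> > C}
      \<le> measure M {\<omega>\<in>space M. \<not> pair_sums_concentrated n P r t (\<lambda>k l. X k l \<omega>)}"
    by (intro finite_measure_mono[OF _ bad(1)]) blast
  also have "\<dots> \<le> 4 * (real P)\<^sup>2 * exp (- (real n * t\<^sup>2 / 16))"
    by (rule bad(2))
  also have "exp (- (real n * t\<^sup>2 / 16)) = 1 / (real P)^4"
  proof -
    have "real n * t\<^sup>2 / 16 = 4 * ln (real P)" unfolding t(2) using n_pos by simp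
    moreover have "exp (4 * ln (real P)) = (real P)^4"
      using P by (simp add: exp_of_nat_mult[of 4, simplified])
    ultimately show ?thesis by (simp add: exp_minus inverse_eq_divide)
  qed
  also have "4 * (real P)\<^sup>2 * (1 / (real P)^4) = 4 / (real P)\<^sup>2"
    using P by (simp add: power2_eq_square power4_eq_xxxx)
  finally show ?thesis .
qed

lemma bounded_in_probI:
  fixes b :: "nat \<Rightarrow> real"
  assumes tail: "\<And>C. C \<ge> C\<^sub>0 \<Longrightarrow>
      eventually (\<lambda>n. measure (M n) {\<omega> \<in> space (M n). \<bar>\<xi> n \<omega> / a n\<bar> > C} \<le> b n) sequentially"
    and b: "b \<longlonglongrightarrow> 0"
  shows "bounded_in_prob M \<xi> a"
  unfolding bounded_in_prob_def
proof (rule tendsto_eventually, rule eventually_mono[OF eventually_ge_at_top[of C\<^sub>0]])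
  fix C assume "C \<ge> C\<^sub>0"
  have "limsup (\<lambda>n. ereal (measure (M n) {\<omega> \<in> space (M n). \<bar>\<xi> n \<omega> / a n\<bar> > C}))
      \<le> limsup (\<lambda>n. ereal (b n))"
    using tail[OF \<open>C \<ge> C\<^sub>0\<close>] by (intro Limsup_mono) (simp add: eventually_mono)
  also have "\<dots> = 0"
    using tendsto_ereal[OF b] by (intro lim_imp_Limsup) (auto simp: zero_ereal_def)
  finally show "limsup (\<lambda>n. ereal (measure (M n) {\<omega> \<in> space (M n). \<bar>\<xi> n \<omega> / a n\<bar> > C})) = 0"
    by (intro antisym le_Limsup) auto
qed

lemma eventually_max_corr_diff_tail_bound:
  fixes M :: "nat \<Rightarrow> 'a measure"
    and X :: "nat \<Rightarrow> nat \<Rightarrow> nat \<Rightarrow> 'a \<Rightarrow> real"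
  assumes prob: "\<And>n. prob_space (M n)"
    and gauss: "\<And>n k. k \<in> {1..n} \<Longrightarrow>
        centered_gaussian_vector (M n) (p n) (ar1_cov (r n)) (\<lambda>\<omega> i. X n k i \<omega>)"
    and indep: "\<And>n. prob_space.indep_vars (M n) (\<lambda>_. PiM {1..p n} (\<lambda>_. borel))
        (\<lambda>k \<omega>. restrict (\<lambda>i. X n k i \<omega>) {1..p n}) {1..n}"
    and r_range: "\<And>n. 0 \<le> r n \<and> r n < 1"
    and p_inf: "filterlim p at_top sequentially"
    and logp: "(\<lambda>n. ln (real (p n))) \<in> o(\<lambda>n. real n)"
    and C: "C \<ge> 1344"
  shows "eventually (\<lambda>n. measure (M n) {\<omega> \<in> space (M n).
           \<bar>max_corr_diff n (r n) (p n) (\<lambda>k l. X n k l \<omega>) / (ln (real (p n)) / sqrt (real n))\<bar> > C}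
         \<le> 4 / (real (p n))\<^sup>2) sequentially"
proof -
  have "eventually (\<lambda>n. p n \<ge> 2) sequentially"
    using p_inf by (simp add: filterlim_at_top)
  moreover have "eventually (\<lambda>n. norm (ln (real (p n))) \<le> 1/2304 * norm (real n)) sequentially"
    using landau_o.smallD[OF logp, of "1/2304"] by simp
  moreover note eventually_ge_at_top[of 1]
  ultimately show ?thesis
  proof eventually_elim
    case (elim n)
    then show ?case
      using max_corr_diff_tail_bound[where M="M n" and X="X n", OF prob gauss indep] r_range[of n] C
      by simp
  qed
qed

theorem mainTheorem12:
  fixes M :: "nat \<Rightarrow> 'a measure"
    and X :: "nat \<Rightarrow> nat \<Rightarrow> nat \<Rightarrow> 'a \<Rightarrow> real"
    and p :: "nat \<Rightarrow> nat"
    and r :: "nat \<Rightarrow> real"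
  assumes prob: "\<And>n. prob_space (M n)"
    and gauss: "\<And>n k. k \<in> {1..n} \<Longrightarrow>
        centered_gaussian_vector (M n) (p n) (ar1_cov (r n)) (\<lambda>\<omega> i. X n k i \<omega>)"
    and indep: "\<And>n. prob_space.indep_vars (M n) (\<lambda>_. PiM {1..p n} (\<lambda>_. borel))
        (\<lambda>k \<omega>. restrict (\<lambda>i. X n k i \<omega>) {1..p n}) {1..n}"
    and r_range: "\<And>n. 0 \<le> r n \<and> r n < 1"
    and p_inf: "filterlim p at_top sequentially"
    and logp: "(\<lambda>n. ln (real (p n))) \<in> o(\<lambda>n. real n)"
  shows "bounded_in_prob M
     (\<lambda>n \<omega>.
        Max ((\<lambda>(i, j). sqrt (real n) * rho_hat n (\<lambda>k l. X n k l \<omega>) i j)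
               ` {(i, j). 1 \<le> i \<and> i < j \<and> j \<le> p n})
      - Max ((\<lambda>(i, j). sqrt (real n) * ar1_cov (r n) i j
               + (1 / sqrt (real n)) * (\<Sum>k=1..n.
                   X n k i \<omega> * X n k j \<omega>
                   - ar1_cov (r n) i j / 2 * ((X n k i \<omega>)\<^sup>2 + (X n k j \<omega>)\<^sup>2)))
               ` {(i, j). 1 \<le> i \<and> i < j \<and> j \<le> p n}))
     (\<lambda>n. ln (real (p n)) / sqrt (real n))"
proof -
  have "filterlim (\<lambda>n. real (p n)) at_top sequentially"
    by (rule filterlim_compose[OF filterlim_real_sequentially p_inf])
  then have "filterlim (\<lambda>n. (real (p n))\<^sup>2) at_top sequentially"
    by (rule filterlim_pow_at_top[of 2, simplified])
  then have "(\<lambda>n. 4 / (real (p n))\<^sup>2) \<longlonglongrightarrow> 0"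
    by (intro tendsto_divide_0[OF tendsto_const] filterlim_at_top_imp_at_infinity)
  with eventually_max_corr_diff_tail_bound[OF prob gauss indep r_range p_inf logp]
  have "bounded_in_prob M (\<lambda>n \<omega>. max_corr_diff n (r n) (p n) (\<lambda>k l. X n k l \<omega>))
      (\<lambda>n. ln (real (p n)) / sqrt (real n))"
    by (rule bounded_in_probI)
  then show ?thesis by (simp add: max_corr_diff_def)
qed

end
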